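(* Let $G$ be a finite non-cyclic abelian $p$-group. Then $\Delta_D(G)=\mathcal{P}_e(G)$ if and only if $G$ is elementary abelian.
   Context: The enhanced power graph $\mathcal{P}_e(G)$ has vertex set $G$ with distinct $x,y$ adjacent iff $\langle x,y\rangle$ is cyclic. The deep commuting graph $\Delta_D(G)$ has vertex set $G$, distinct vertices adjacent iff their preimages commute in a Schur cover $\tilde G$ of $G$ (a central extension $\{e\}\to M(G)\to\tilde G\to G\to\{e\}$ with kernel contained in $Z(\tilde G)\cap[\tilde G,\tilde G]$, of maximal order; $M(G)$ the Schur multiplier). An elementary abelian $p$-group is one in which every non-identity element has order $p$. *)

theory Defs
  imports "HOL-Algebra.Algebra"
begin

definition group_center :: "('a, 'b) monoid_scheme \<Rightarrow> 'a set" where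
  "group_center H = {z \<in> carrier H. \<forall>g \<in> carrier H. z \<otimes>\<^bsub>H\<^esub> g = g \<otimes>\<^bsub>H\<^esub> z}"

text \<open>The covering groups
  are represented with carrier in nat (every finite group is isomorphic to one).\<close>
definition stem_extension :: "('a, 'b) monoid_scheme \<Rightarrow> nat monoid \<Rightarrow> (nat \<Rightarrow> 'a) \<Rightarrow> bool" where
  "stem_extension G H \<pi> \<longleftrightarrow>
     group H \<and> finite (carrier H) \<and> \<pi> \<in> hom H G \<and> \<pi> ` carrier H = carrier G \<and>
     kernel H G \<pi> \<subseteq> group_center H \<and> kernel H G \<pi> \<subseteq> derived H (carrier H)"

text \<open>A Schur cover: a stem extension of maximal order (its kernel is then M(G)).\<close>
definition schur_cover :: "('a, 'b) monoid_scheme \<Rightarrow> nat monoid \<Rightarrow> (nat \<Rightarrow> 'a) \<Rightarrow> bool" where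
  "schur_cover G H \<pi> \<longleftrightarrow> stem_extension G H \<pi> \<and>
     (\<forall>(K :: nat monoid) \<psi>. stem_extension G K \<psi> \<longrightarrow> order K \<le> order H)"

definition enhanced_power_adj :: "('a, 'b) monoid_scheme \<Rightarrow> 'a \<Rightarrow> 'a \<Rightarrow> bool" where
  "enhanced_power_adj G x y \<longleftrightarrow> x \<noteq> y \<and> cyclic_group (subgroup_generated G {x, y})"

definition deep_commuting_adj ::
  "('a, 'b) monoid_scheme \<Rightarrow> nat monoid \<Rightarrow> (nat \<Rightarrow> 'a) \<Rightarrow> 'a \<Rightarrow> 'a \<Rightarrow> bool" where
  "deep_commuting_adj G H \<pi> x y \<longleftrightarrow> x \<noteq> y \<and>
     (\<forall>x' \<in> carrier H. \<forall>y' \<in> carrier H. \<pi> x' = x \<longrightarrow> \<pi> y' = y \<longrightarrow>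
        x' \<otimes>\<^bsub>H\<^esub> y' = y' \<otimes>\<^bsub>H\<^esub> x')"

definition deep_commuting_eq_enhanced_power :: "('a, 'b) monoid_scheme \<Rightarrow> bool" where
  "deep_commuting_eq_enhanced_power G \<longleftrightarrow>
     (\<forall>(H :: nat monoid) \<pi>. schur_cover G H \<pi> \<longrightarrow>
        (\<forall>x \<in> carrier G. \<forall>y \<in> carrier G.
           deep_commuting_adj G H \<pi> x y \<longleftrightarrow> enhanced_power_adj G x y))"

definition elementary_abelian :: "('a, 'b) monoid_scheme \<Rightarrow> nat \<Rightarrow> bool" where
  "elementary_abelian G p \<longleftrightarrow>
     comm_group G \<and> (\<forall>x \<in> carrier G. x \<noteq> \<one>\<^bsub>G\<^esub> \<longrightarrow> group.ord G x = p)"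

end

theory Submission
  imports Defs
begin

definition commutator :: "('a, 'b) monoid_scheme \<Rightarrow> 'a \<Rightarrow> 'a \<Rightarrow> 'a" where
  "commutator G a b = a \<otimes>\<^bsub>G\<^esub> b \<otimes>\<^bsub>G\<^esub> inv\<^bsub>G\<^esub> a \<otimes>\<^bsub>G\<^esub> inv\<^bsub>G\<^esub> b"

context group
begin

lemma commutator_closed [simp]:
  "a \<in> carrier G \<Longrightarrow> b \<in> carrier G \<Longrightarrow> commutator G a b \<in> carrier G"
  by (simp add: commutator_def)

lemma commutator_eq: "a \<in> carrier G \<Longrightarrow> b \<in> carrier G \<Longrightarrow> commutator G a b = a \<otimes> b \<otimes> inv (b \<otimes> a)"
  by (simp add: commutator_def inv_mult_group m_assoc)

lemma commutator_eq_one_iff: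
  assumes "a \<in> carrier G" "b \<in> carrier G"
  shows "commutator G a b = \<one> \<longleftrightarrow> a \<otimes> b = b \<otimes> a"
proof -
  have "commutator G a b = (a \<otimes> b) \<otimes> inv (b \<otimes> a)"
    using assms by (simp add: commutator_def inv_mult_group m_assoc)
  then show ?thesis
    using assms by (metis inv_closed m_closed r_inv inv_equality l_one)
qed

lemma inv_commutator:
  "a \<in> carrier G \<Longrightarrow> b \<in> carrier G \<Longrightarrow> inv (commutator G a b) = commutator G b a"
  by (simp add: commutator_def inv_mult_group m_assoc)

lemma inv_mult_cancel_left [simp]:
  "x \<in> carrier G \<Longrightarrow> y \<in> carrier G \<Longrightarrow> inv x \<otimes> (x \<otimes> y) = y"
  by (simp add: m_assoc [symmetric])

lemma mult_inv_cancel_left [simp]: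
  "x \<in> carrier G \<Longrightarrow> y \<in> carrier G \<Longrightarrow> x \<otimes> (inv x \<otimes> y) = y"
  by (simp add: m_assoc [symmetric])

lemma commutator_mult_central_left:
  assumes "a \<in> carrier G" "b \<in> carrier G" "z \<in> group_center G"
  shows "commutator G (a \<otimes> z) b = commutator G a b"
proof -
  have z: "z \<in> carrier G" "z \<otimes> b = b \<otimes> z"
    using assms by (auto simp: group_center_def)
  have "commutator G (a \<otimes> z) b = a \<otimes> (z \<otimes> b) \<otimes> inv z \<otimes> inv a \<otimes> inv b"
    using assms(1,2) z(1) by (simp add: commutator_def inv_mult_group m_assoc)
  also have "\<dots> = commutator G a b"
    using assms(1,2) z by (simp add: commutator_def m_assoc)
  finally show ?thesis .
qed

lemma commutator_mult_central_right:
  assumes "a \<in> carrier G" "b \<in> carrier G" "z \<in> group_center G"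
  shows "commutator G a (b \<otimes> z) = commutator G a b"
proof -
  have z: "z \<in> carrier G" "z \<otimes> inv a = inv a \<otimes> z"
    using assms by (auto simp: group_center_def)
  have "commutator G a (b \<otimes> z) = a \<otimes> b \<otimes> (z \<otimes> inv a) \<otimes> inv z \<otimes> inv b"
    using assms(1,2) z(1) by (simp add: commutator_def inv_mult_group m_assoc)
  also have "\<dots> = commutator G a b"
    using assms(1,2) z by (simp add: commutator_def m_assoc)
  finally show ?thesis .
qed

lemma commutator_pow_left:
  assumes a: "a \<in> carrier G" and b: "b \<in> carrier G" and central: "commutator G a b \<in> group_center G"
  shows "commutator G (a [^] (n::nat)) b = commutator G a b [^] n"
proof (induction n)
  case 0
  then show ?case
    using b by (simp add: commutator_def)
next
  case (Suc n)
  let ?c = "commutator G a b"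
  have c: "?c \<in> carrier G" "?c \<otimes> inv (a [^] n) = inv (a [^] n) \<otimes> ?c"
    using central a by (auto simp: group_center_def)
  have "commutator G (a [^] n \<otimes> a) b = a [^] n \<otimes> (?c \<otimes> inv (a [^] n)) \<otimes> commutator G (a [^] n) b"
    using a b by (simp add: commutator_def inv_mult_group m_assoc)
  also have "\<dots> = ?c \<otimes> commutator G (a [^] n) b"
    using a b c by (simp add: m_assoc)
  also have "\<dots> = commutator G a b [^] Suc n"
    using c(1) by (simp add: Suc flip: nat_pow_Suc2)
  finally show ?case
    by simp
qed

lemma commutator_in_derived:
  "a \<in> carrier G \<Longrightarrow> b \<in> carrier G \<Longrightarrow> commutator G a b \<in> derived G (carrier G)"
  unfolding derived_def commutator_def by (rule generate.incl) blast

lemma subgroup_group_center: "subgroup (group_center G) G"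
proof (rule subgroupI)
  fix a b assume "a \<in> group_center G" "b \<in> group_center G"
  then have ab: "a \<in> carrier G" "b \<in> carrier G"
    and a_comm: "\<And>g. g \<in> carrier G \<Longrightarrow> a \<otimes> g = g \<otimes> a"
    and b_comm: "\<And>g. g \<in> carrier G \<Longrightarrow> b \<otimes> g = g \<otimes> b"
    by (auto simp: group_center_def)
  have "a \<otimes> b \<otimes> g = g \<otimes> (a \<otimes> b)" if g: "g \<in> carrier G" for g
  proof -
    have "a \<otimes> b \<otimes> g = a \<otimes> (g \<otimes> b)"
      using ab g by (simp add: m_assoc b_comm)
    also have "\<dots> = (a \<otimes> g) \<otimes> b"
      using ab g by (simp add: m_assoc)
    also have "\<dots> = g \<otimes> (a \<otimes> b)"
      using ab g by (simp add: m_assoc a_comm)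
    finally show ?thesis .
  qed
  then show "a \<otimes> b \<in> group_center G"
    using ab by (simp add: group_center_def)
  have "inv a \<otimes> g = g \<otimes> inv a" if g: "g \<in> carrier G" for g
  proof -
    have "inv a \<otimes> g = inv a \<otimes> (g \<otimes> a) \<otimes> inv a"
      using ab g by (simp add: m_assoc)
    also have "\<dots> = g \<otimes> inv a"
      using ab g by (simp add: m_assoc flip: a_comm)
    finally show ?thesis .
  qed
  then show "inv a \<in> group_center G"
    using ab by (simp add: group_center_def)
qed (auto simp: group_center_def)

lemma normal_if_subset_group_center:
  assumes "subgroup K G" "K \<subseteq> group_center G"
  shows "K \<lhd> G"
proof (rule normal_invI[OF assms(1)])
  fix x h assume "x \<in> carrier G" "h \<in> K"
  then show "x \<otimes> h \<otimes> inv x \<in> K"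
    using assms by (auto simp: group_center_def m_assoc)
qed

lemma mem_generate_pow_coprime:
  assumes x: "x \<in> carrier G" and "coprime k (int (ord x))"
  shows "x \<in> generate G {x [^] k}"
proof -
  have "gcd k (int (ord x)) = 1"
    using assms(2) by simp
  then obtain u v where uv: "u * k + v * int (ord x) = 1"
    using bezout_int by metis
  have "x = x [^] (k * u + int (ord x) * v)"
    using x uv by (simp add: mult.commute)
  also have "\<dots> = (x [^] k) [^] u \<otimes> (x [^] int (ord x)) [^] v"
    using x by (simp add: int_pow_pow int_pow_mult)
  also have "\<dots> = (x [^] k) [^] u"
    using x by (simp add: int_pow_int)
  finally show ?thesis
    using x by (auto simp: generate_pow)
qed

lemma mem_generate_pow_prime:
  fixes p :: nat
  assumes p: "Factorial_Ring.prime p" and x: "x \<in> carrier G" "x [^] p = \<one>" and k: "x [^] (k::int) \<noteq> \<one>"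
  shows "x \<in> generate G {x [^] k}"
proof -
  have "x \<noteq> \<one>"
    using k by auto
  then have "ord x = p"
    using x p ord_eq_1[of x] pow_eq_id[of x p] by (metis prime_nat_iff)
  then have "\<not> int p dvd k"
    using k x(1) by (simp add: int_pow_eq_id)
  then have "coprime (int p) k"
    using p by (simp add: prime_imp_coprime prime_nat_int_transfer)
  then show ?thesis
    using x(1) \<open>ord x = p\<close> by (intro mem_generate_pow_coprime) (simp_all add: coprime_commute)
qed

lemma cyclic_subgroup_generated_pairE:
  assumes "x \<in> carrier G" "y \<in> carrier G" "cyclic_group (subgroup_generated G {x, y})"
  obtains g where "g \<in> generate G {x, y}" "x \<in> generate G {g}" "y \<in> generate G {g}"
proof -
  let ?K = "subgroup_generated G {x, y}"
  have K: "carrier ?K = generate G {x, y}"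
    using assms by (simp add: carrier_subgroup_generated Int_absorb1)
  obtain g where g: "g \<in> carrier ?K" "carrier ?K = range (\<lambda>n::int. g [^]\<^bsub>?K\<^esub> n)"
    using assms(3) group.cyclic_group[OF group_subgroup_generated] by blast
  have gG: "g \<in> carrier G"
    using g(1) K generate_in_carrier[of "{x, y}"] assms(1,2) by auto
  have "carrier ?K = range (\<lambda>n::int. g [^] n)"
    unfolding g(2) using g(1) by (simp add: int_pow_subgroup_generated)
  also have "\<dots> = generate G {g}"
    using gG by (auto simp: generate_pow)
  finally have "carrier ?K = generate G {g}" .
  moreover have "x \<in> generate G {x, y}" "y \<in> generate G {x, y}"
    by (simp_all add: generate.incl)
  ultimately show ?thesis
    using that g(1) K by simp
qed

lemma cyclic_subgroup_generated_pairI: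
  assumes "x \<in> carrier G" "y \<in> generate G {x}"
  shows "cyclic_group (subgroup_generated G {x, y})"
proof -
  have y: "y \<in> carrier G"
    using assms generate_in_carrier[of "{x}"] by auto
  have "{x, y} \<subseteq> generate G {x}"
    using assms by (simp add: generate.incl)
  then have "generate G {x, y} \<subseteq> generate G {x}"
    using assms(1) by (simp add: generate_subgroup_incl generate_is_subgroup)
  then have "generate G {x, y} = generate G {x}"
    using mono_generate[of "{x}" "{x, y}"] by blast
  then have "subgroup_generated G {x, y} = subgroup_generated G {x}"
    using assms(1) y by (simp add: subgroup_generated_def Int_absorb1)
  then show ?thesis by (simp add: cyclic_group_generated)
qed

lemma exists_max_ord:
  assumes "finite (carrier G)"
  obtains g where "g \<in> carrier G" "\<And>z. z \<in> carrier G \<Longrightarrow> ord z \<le> ord g"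
proof -
  have "Max (ord ` carrier G) \<in> ord ` carrier G"
    using assms by (intro Max_in) auto
  then obtain g where g: "g \<in> carrier G" "ord g = Max (ord ` carrier G)"
    by (metis imageE)
  then show ?thesis
    using that assms by simp
qed

lemma cyclic_group_if_generate_eq_carrier:
  assumes "g \<in> carrier G" "generate G {g} = carrier G"
  shows "cyclic_group G"
proof -
  have "carrier G = range (\<lambda>n::int. g [^] n)"
    using assms by (auto simp: generate_pow)
  then show ?thesis
    using assms(1) cyclic_group by blast
qed

lemma ord_eq_prime_power:
  assumes "Factorial_Ring.prime p" "order G = p ^ n" "z \<in> carrier G"
  obtains i where "i \<le> n" "ord z = p ^ i"
  using ord_dvd_group_order[OF assms(3)] assms(1,2) divides_primepow_nat by auto

lemma exists_maximal_subgroup_avoiding: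
  assumes fin: "finite (carrier G)" and M0: "subgroup M0 G" and x: "x \<notin> M0"
  obtains M where "subgroup M G" "M0 \<subseteq> M" "x \<notin> M" "\<And>S. subgroup S G \<Longrightarrow> M \<subset> S \<Longrightarrow> x \<in> S"
proof -
  define MM where "MM = {M. subgroup M G \<and> M0 \<subseteq> M \<and> x \<notin> M}"
  have "MM \<subseteq> Pow (carrier G)"
    by (auto simp: MM_def dest: subgroup.subset)
  then have "finite MM"
    using fin by (simp add: finite_subset)
  moreover have "M0 \<in> MM"
    using M0 x by (simp add: MM_def)
  ultimately have "Max (card ` MM) \<in> card ` MM"
    by (intro Max_in) auto
  then obtain M where M: "M \<in> MM" "card M = Max (card ` MM)"
    by auto
  show ?thesis
  proof (rule that)
    show "subgroup M G" "M0 \<subseteq> M" "x \<notin> M"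
      using M(1) by (auto simp: MM_def)
    fix S assume S: "subgroup S G" "M \<subset> S"
    show "x \<in> S"
    proof (rule ccontr)
      assume "x \<notin> S"
      then have "S \<in> MM"
        using S M(1) by (auto simp: MM_def)
      then have "card S \<le> card M"
        using M(2) \<open>finite MM\<close> by simp
      moreover have "finite S"
        using subgroup.subset[OF S(1)] fin by (rule finite_subset)
      then have "card M < card S"
        using S(2) by (rule psubset_card_mono)
      ultimately show False
        by simp
    qed
  qed
qed

end

context comm_group
begin

lemma subgroup_pow_eq_one: "subgroup {z \<in> carrier G. z [^] (n::nat) = \<one>} G"
  by (rule subgroupI) (auto simp: nat_pow_inv pow_mult_distrib m_comm)

lemma cyclic_subgroup_generated_pair_iff:
  fixes p :: nat
  assumes p: "Factorial_Ring.prime p" and x: "x \<in> carrier G" "x [^] p = \<one>" "x \<noteq> \<one>"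
    and y: "y \<in> carrier G" "y [^] p = \<one>"
  shows "cyclic_group (subgroup_generated G {x, y}) \<longleftrightarrow> y \<in> generate G {x}"
proof
  assume "cyclic_group (subgroup_generated G {x, y})"
  then obtain g where g: "g \<in> generate G {x, y}" "x \<in> generate G {g}" "y \<in> generate G {g}"
    using x y cyclic_subgroup_generated_pairE by metis
  have "generate G {x, y} \<subseteq> {z \<in> carrier G. z [^] p = \<one>}"
    using x y subgroup_pow_eq_one by (intro generate_subgroup_incl) auto
  then have gG: "g \<in> carrier G" and "g [^] p = \<one>"
    using g(1) by auto
  moreover obtain k :: int where "x = g [^] k"
    using g(2) gG by (auto simp: generate_pow)
  ultimately have "g \<in> generate G {x}"
    using p x(3) mem_generate_pow_prime by blast
  then have "generate G {g} \<subseteq> generate G {x}"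
    using x(1) by (simp add: generate_subgroup_incl generate_is_subgroup)
  then show "y \<in> generate G {x}"
    using g(3) by blast
next
  assume "y \<in> generate G {x}"
  then show "cyclic_group (subgroup_generated G {x, y})"
    using x(1) cyclic_subgroup_generated_pairI by blast
qed

lemma ord_eq_prime_mult_ord_pow:
  assumes p: "Factorial_Ring.prime p" and ord_G: "order G = p ^ n"
    and y: "y \<in> carrier G" "y \<noteq> \<one>"
  shows "ord y = p * ord (y [^] p)"
proof -
  obtain i where i: "ord y = p ^ i"
    using ord_eq_prime_power[OF p ord_G y(1)] by blast
  then have "i \<noteq> 0"
    using y ord_eq_1 by force
  then have "p dvd ord y"
    using i by simp
  then show ?thesis
    using ord_pow[OF y(1)] p by (simp add: prime_gt_0_nat)
qed

lemma prime_dvd_if_pow_prime_eq_pow_of_max_ord: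
  assumes p: "Factorial_Ring.prime p" and ord_G: "order G = p ^ n"
    and g: "g \<in> carrier G" and g_max: "\<And>z. z \<in> carrier G \<Longrightarrow> ord z \<le> ord g"
    and y: "y \<in> carrier G" "y \<noteq> \<one>" "y [^] p = g [^] m"
  shows "p dvd m"
proof (rule ccontr)
  assume "\<not> p dvd m"
  obtain k where k: "ord g = p ^ k"
    using ord_eq_prime_power[OF p ord_G g] by blast
  then have "coprime (ord g) m"
    using \<open>\<not> p dvd m\<close> p by (simp add: prime_imp_coprime)
  then have "ord y = p * ord g"
    using ord_eq_prime_mult_ord_pow[OF p ord_G y(1,2)] y(3) \<open>\<not> p dvd m\<close> g
    by (auto simp: ord_pow_gen)
  moreover have "ord g > 0"
    using k p prime_gt_0_nat by simp
  ultimately show False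
    using g_max[OF y(1)] p prime_gt_1_nat[OF p] by simp
qed

lemma pow_prime_mem_if_ord_minimal:
  assumes fin: "finite (carrier G)" and p: "Factorial_Ring.prime p" and ord_G: "order G = p ^ n"
    and y: "y \<in> carrier G" "y \<notin> K" and one: "\<one> \<in> K"
    and y_min: "\<And>z. z \<in> carrier G \<Longrightarrow> z \<notin> K \<Longrightarrow> ord y \<le> ord z"
  shows "y [^] p \<in> K"
proof (rule ccontr)
  assume "y [^] p \<notin> K"
  then have "ord y \<le> ord (y [^] p)"
    using y_min y(1) by simp
  moreover have "ord (y [^] p) > 0"
    using fin y(1) ord_ge_1[of "y [^] p"] by simp
  moreover have "y \<noteq> \<one>"
    using y(2) one by blast
  then have "ord y = p * ord (y [^] p)"
    using ord_eq_prime_mult_ord_pow[OF p ord_G y(1)] by blast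
  ultimately show False
    using prime_gt_1_nat[OF p] by simp
qed

lemma exists_pow_prime_eq_one_notin_generate:
  assumes fin: "finite (carrier G)" and p: "Factorial_Ring.prime p" and ord_G: "order G = p ^ n"
    and g: "g \<in> carrier G" and g_max: "\<And>z. z \<in> carrier G \<Longrightarrow> ord z \<le> ord g"
    and not_gen: "carrier G \<noteq> generate G {g}"
  obtains y where "y \<in> carrier G" "y [^] p = \<one>" "y \<notin> generate G {g}"
proof -
  obtain y1 where "y1 \<in> carrier G" "y1 \<notin> generate G {g}"
    using not_gen g generate_incl[of "{g}"] by blast
  then have "\<exists>y. (y \<in> carrier G \<and> y \<notin> generate G {g}) \<and>
      (\<forall>z. z \<in> carrier G \<and> z \<notin> generate G {g} \<longrightarrow> ord y \<le> ord z)"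
    using ex_has_least_nat[of "\<lambda>z. z \<in> carrier G \<and> z \<notin> generate G {g}" y1 ord] by blast
  then obtain y where y: "y \<in> carrier G" "y \<notin> generate G {g}"
    and y_min: "\<And>z. z \<in> carrier G \<Longrightarrow> z \<notin> generate G {g} \<Longrightarrow> ord y \<le> ord z"
    by blast
  have "y \<noteq> \<one>"
    using y(2) generate.one by blast
  have "y [^] p \<in> generate G {g}"
    using pow_prime_mem_if_ord_minimal[OF fin p ord_G y generate.one y_min] .
  then obtain m :: nat where m: "y [^] p = g [^] m"
    using generate_pow_on_finite_carrier[OF fin g] by auto
  then obtain m' where m': "m = p * m'"
    using prime_dvd_if_pow_prime_eq_pow_of_max_ord[OF p ord_G g g_max y(1) \<open>y \<noteq> \<one>\<close>] by blast
  define y0 where "y0 = y \<otimes> inv (g [^] m')"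
  have "y0 [^] p = y [^] p \<otimes> inv ((g [^] m') [^] p)"
    using y(1) g by (simp add: y0_def pow_mult_distrib m_comm nat_pow_inv)
  also have "\<dots> = \<one>"
    using g by (simp add: m m' nat_pow_pow mult.commute)
  finally have "y0 [^] p = \<one>" .
  moreover have "y0 \<notin> generate G {g}"
  proof
    assume "y0 \<in> generate G {g}"
    moreover have "g [^] m' \<in> generate G {g}"
      using g generate_pow_on_finite_carrier[OF fin g] by auto
    ultimately have "y0 \<otimes> g [^] m' \<in> generate G {g}"
      by (simp add: generate.eng)
    then show False
      using y g by (simp add: y0_def m_assoc)
  qed
  moreover have "y0 \<in> carrier G"
    using y(1) g by (simp add: y0_def)
  ultimately show ?thesis
    using that by blast
qed

lemma non_elementary_witness:
  assumes fin: "finite (carrier G)" and p: "Factorial_Ring.prime p" and ord_G: "order G = p ^ n"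
    and not_cyclic: "\<not> cyclic_group G"
    and x: "x \<in> carrier G" "x \<noteq> \<one>" "ord x \<noteq> p"
  obtains h y where "h \<in> carrier G" "y \<in> carrier G" "ord (h [^] p) = p"
    "y [^] p = \<one>" "y \<notin> generate G {h [^] p}"
proof -
  have p1: "p > 1"
    using p prime_gt_1_nat by blast
  obtain g where g: "g \<in> carrier G" and g_max: "\<And>z. z \<in> carrier G \<Longrightarrow> ord z \<le> ord g"
    using exists_max_ord[OF fin] by blast
  obtain k where k: "ord g = p ^ k"
    using ord_eq_prime_power[OF p ord_G g] by blast
  obtain j where j: "ord x = p ^ j"
    using ord_eq_prime_power[OF p ord_G x(1)] by blast
  have "j \<noteq> 0"
    using j x(1,2) ord_eq_1 by force
  moreover have "j \<noteq> 1"
    using j x(3) by auto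
  moreover have "p ^ j \<le> p ^ k"
    using g_max[OF x(1)] j k by simp
  ultimately have k2: "k \<ge> 2"
    using p1 by simp
  have "carrier G \<noteq> generate G {g}"
    using not_cyclic cyclic_group_if_generate_eq_carrier[OF g] by metis
  then obtain y where y: "y \<in> carrier G" "y [^] p = \<one>" "y \<notin> generate G {g}"
    using exists_pow_prime_eq_one_notin_generate[OF fin p ord_G g g_max] by blast
  define r where "r = k - 2"
  have "k = Suc (Suc r)"
    using k2 by (simp add: r_def)
  then have r: "ord g = p ^ Suc r * p"
    using k by (simp add: algebra_simps)
  define h where "h = g [^] (p ^ r)"
  have hp: "h [^] p = g [^] (p ^ Suc r)"
    using g by (simp add: h_def nat_pow_pow flip: power_Suc2)
  have "ord (h [^] p) = p"
    using ord_pow[OF g, of "p ^ Suc r"] p1 r by (simp add: hp)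
  moreover have "generate G {h [^] p} \<subseteq> generate G {g}"
    using g generate_pow_on_finite_carrier[OF fin g]
    by (intro generate_subgroup_incl generate_is_subgroup) (auto simp: hp)
  ultimately show ?thesis
    using that[of h y] g y by (auto simp: h_def)
qed

lemma set_mult_generate_supset:
  assumes "subgroup M G" "g \<in> carrier G"
  shows "M \<subseteq> M <#> generate G {g}" "g \<in> M <#> generate G {g}"
  using assms generate.one[of G "{g}"] generate.incl[of g "{g}" G] unfolding set_mult_def
  by (force dest: subgroup.mem_carrier subgroup.one_closed)+

lemma mem_set_mult_generate_exchange:
  fixes p :: nat
  assumes p: "Factorial_Ring.prime p" and M: "subgroup M G"
    and x: "x \<in> carrier G" "x \<notin> M" and g: "g \<in> carrier G" "g [^] p = \<one>"
    and x_in: "x \<in> M <#> generate G {g}"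
  shows "g \<in> M <#> generate G {x}"
proof -
  let ?K = "M <#> generate G {x}"
  have K: "subgroup ?K G"
    using M x(1) by (simp add: mult_subgroups generate_is_subgroup)
  obtain m j where m: "m \<in> M" and j: "x = m \<otimes> g [^] (j::int)"
    using x_in g(1) unfolding set_mult_def by (auto simp: generate_pow)
  have m_G: "m \<in> carrier G"
    using M m by (rule subgroup.mem_carrier)
  have "g [^] j = inv m \<otimes> x"
    using j m_G g by simp
  also have "inv m \<otimes> x \<in> ?K"
    using K set_mult_generate_supset[OF M x(1)] m by (blast intro: subgroup.m_closed subgroup.m_inv_closed)
  finally have gj_K: "g [^] j \<in> ?K" .
  have "g [^] j \<noteq> \<one>"
    using j m x(2) m_G by auto
  then have "g \<in> generate G {g [^] j}"
    using p g by (intro mem_generate_pow_prime)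
  also have "\<dots> \<subseteq> ?K"
    using K gj_K by (simp add: generate_subgroup_incl)
  finally show ?thesis .
qed

lemma set_mult_generate_eq_carrier:
  fixes p :: nat
  assumes p: "Factorial_Ring.prime p" and exp: "\<And>g. g \<in> carrier G \<Longrightarrow> g [^] p = \<one>"
    and M: "subgroup M G" and x: "x \<in> carrier G" "x \<notin> M"
    and M_max: "\<And>S. subgroup S G \<Longrightarrow> M \<subset> S \<Longrightarrow> x \<in> S"
  shows "M <#> generate G {x} = carrier G"
proof
  show "M <#> generate G {x} \<subseteq> carrier G"
    using M x(1) by (simp add: mult_subgroups generate_is_subgroup subgroup.subset)
  show "carrier G \<subseteq> M <#> generate G {x}"
  proof
    fix g assume g: "g \<in> carrier G"
    show "g \<in> M <#> generate G {x}"
    proof (cases "g \<in> M")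
      case True
      then show ?thesis
        using set_mult_generate_supset(1)[OF M x(1)] by blast
    next
      case False
      then have "M \<subset> M <#> generate G {g}"
        using set_mult_generate_supset[OF M g] by blast
      then have "x \<in> M <#> generate G {g}"
        using M g by (intro M_max) (simp_all add: mult_subgroups generate_is_subgroup)
      then show ?thesis
        using mem_set_mult_generate_exchange[OF p M x g exp[OF g]] by blast
    qed
  qed
qed

lemma mod_eq_if_mult_inv_pow_mem:
  fixes p :: nat and k l :: int
  assumes p: "Factorial_Ring.prime p" and M: "subgroup M G"
    and x: "x \<in> carrier G" "x [^] p = \<one>" "x \<notin> M" and g: "g \<in> carrier G"
    and k: "g \<otimes> inv (x [^] k) \<in> M" and l: "g \<otimes> inv (x [^] l) \<in> M"
  shows "k mod p = l mod p"
proof -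
  have "inv (g \<otimes> inv (x [^] k)) \<otimes> (g \<otimes> inv (x [^] l)) \<in> M"
    using k l M by (simp add: subgroup.m_closed subgroup.m_inv_closed)
  also have "inv (g \<otimes> inv (x [^] k)) \<otimes> (g \<otimes> inv (x [^] l)) = x [^] (k - l)"
    using g x(1) by (simp add: inv_mult int_pow_diff m_ac)
  finally have "x [^] (k - l) \<in> M" .
  then have "x [^] (k - l) = \<one>"
    using M x mem_generate_pow_prime[OF p x(1,2), of "k - l"]
      generate_subgroup_incl[of "{x [^] (k - l)}" M] by blast
  moreover have "x \<noteq> \<one>"
    using x(3) M subgroup.one_closed by blast
  then have "ord x = p"
    using x(1,2) p ord_eq_1[of x] pow_eq_id[of x p] by (metis prime_nat_iff)
  ultimately show ?thesis
    using x(1) by (simp add: int_pow_eq_id mod_eq_dvd_iff)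
qed

lemma character_of_complement:
  fixes p :: nat
  assumes p: "Factorial_Ring.prime p" and M: "subgroup M G"
    and x: "x \<in> carrier G" "x [^] p = \<one>" "x \<notin> M"
    and complement: "M <#> generate G {x} = carrier G"
  obtains \<phi> where "\<phi> \<in> hom G (integer_mod_group p)" "\<phi> x = 1" "\<And>m. m \<in> M \<Longrightarrow> \<phi> m = 0"
proof -
  define R where "R g k \<longleftrightarrow> g \<otimes> inv (x [^] (k::int)) \<in> M" for g k
  have R_ex: "\<exists>k. R g k" if g: "g \<in> carrier G" for g
  proof -
    have "g \<in> M <#> generate G {x}"
      using g complement by simp
    then obtain m k where "m \<in> M" "k \<in> generate G {x}" "g = m \<otimes> k"
      unfolding set_mult_def by blast
    moreover obtain i :: int where "k = x [^] i"
      using \<open>k \<in> generate G {x}\<close> x(1) by (auto simp: generate_pow)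
    ultimately have "R g i"
      using M x(1) by (auto simp: R_def m_assoc dest: subgroup.mem_carrier)
    then show ?thesis ..
  qed
  define \<phi> where "\<phi> g = (SOME k. R g k) mod int p" for g
  have \<phi>_eq: "\<phi> g = k mod p" if g: "g \<in> carrier G" and "R g k" for g k
  proof -
    have "R g (SOME k. R g k)"
      using someI_ex[OF R_ex[OF g]] .
    then show ?thesis
      using mod_eq_if_mult_inv_pow_mem[OF p M x g, where k = "SOME k. R g k" and l = k] \<open>R g k\<close>
      by (simp add: \<phi>_def R_def)
  qed
  show ?thesis
  proof (rule that)
    show "\<phi> \<in> hom G (integer_mod_group p)"
    proof (rule homI)
      fix g h assume gh: "g \<in> carrier G" "h \<in> carrier G"
      show "\<phi> g \<in> carrier (integer_mod_group p)"
        using p prime_gt_0_nat by (simp add: carrier_integer_mod_group \<phi>_def)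
      obtain k l where "R g k" "R h l"
        using R_ex gh by blast
      then have "(g \<otimes> inv (x [^] k)) \<otimes> (h \<otimes> inv (x [^] l)) \<in> M"
        using M by (simp add: R_def subgroup.m_closed)
      moreover have "(g \<otimes> inv (x [^] k)) \<otimes> (h \<otimes> inv (x [^] l)) = (g \<otimes> h) \<otimes> inv (x [^] (k + l))"
        using gh x(1) by (simp add: int_pow_mult inv_mult m_ac)
      ultimately have "R (g \<otimes> h) (k + l)"
        by (simp add: R_def)
      then show "\<phi> (g \<otimes> h) = \<phi> g \<otimes>\<^bsub>integer_mod_group p\<^esub> \<phi> h"
        using gh \<phi>_eq[OF gh(1) \<open>R g k\<close>] \<phi>_eq[OF gh(2) \<open>R h l\<close>] \<phi>_eq[of "g \<otimes> h"]
        by (simp add: mod_add_eq)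
    qed
    show "\<phi> x = 1"
      using \<phi>_eq[OF x(1), of 1] x(1) M p prime_gt_1_nat by (simp add: R_def subgroup.one_closed)
    show "\<phi> m = 0" if m: "m \<in> M" for m
      using \<phi>_eq[of m 0] m M by (simp add: R_def subgroup.mem_carrier)
  qed
qed

lemma exists_character:
  fixes p :: nat
  assumes fin: "finite (carrier G)" and p: "Factorial_Ring.prime p"
    and exp: "\<And>g. g \<in> carrier G \<Longrightarrow> g [^] p = \<one>"
    and M0: "subgroup M0 G" and x: "x \<in> carrier G" "x \<notin> M0"
  obtains \<phi> where "\<phi> \<in> hom G (integer_mod_group p)" "\<phi> x = 1" "\<And>m. m \<in> M0 \<Longrightarrow> \<phi> m = 0"
proof -
  obtain M where M: "subgroup M G" "M0 \<subseteq> M" "x \<notin> M"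
    and M_max: "\<And>S. subgroup S G \<Longrightarrow> M \<subset> S \<Longrightarrow> x \<in> S"
    using exists_maximal_subgroup_avoiding[OF fin M0 x(2)] by blast
  have "M <#> generate G {x} = carrier G"
    using set_mult_generate_eq_carrier[OF p exp M(1) x(1) M(3) M_max] .
  then obtain \<phi> where "\<phi> \<in> hom G (integer_mod_group p)" "\<phi> x = 1" "\<And>m. m \<in> M \<Longrightarrow> \<phi> m = 0"
    using character_of_complement[OF p M(1) x(1) exp[OF x(1)] M(3)] by metis
  then show ?thesis
    using that M(2) by blast
qed

end

locale abelian_central_extension = G: comm_group G + H: group H
  for G :: "('a, 'b) monoid_scheme" and H :: "('c, 'd) monoid_scheme" and \<pi> :: "'c \<Rightarrow> 'a" +
  assumes hom: "\<pi> \<in> hom H G"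
    and surj: "\<pi> ` carrier H = carrier G"
    and kernel_central: "kernel H G \<pi> \<subseteq> group_center H"

begin

lemma group_hom: "group_hom H G \<pi>"
  using hom by (simp add: group_hom_def group_hom_axioms_def G.group_axioms H.group_axioms)

lemma central_if_image_one: "a \<in> carrier H \<Longrightarrow> \<pi> a = \<one>\<^bsub>G\<^esub> \<Longrightarrow> a \<in> group_center H"
  using kernel_central by (auto simp: kernel_def)

definition lift :: "'a \<Rightarrow> 'c" where
  "lift = inv_into (carrier H) \<pi>"

lemma lift_closed [simp]: "g \<in> carrier G \<Longrightarrow> lift g \<in> carrier H"
  using surj by (auto simp: lift_def inv_into_into)

lemma image_lift [simp]: "g \<in> carrier G \<Longrightarrow> \<pi> (lift g) = g"
  using surj by (auto simp: lift_def f_inv_into_f)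

lemma image_commutator:
  assumes "a \<in> carrier H" "b \<in> carrier H"
  shows "\<pi> (commutator H a b) = \<one>\<^bsub>G\<^esub>"
proof -
  interpret group_hom H G \<pi> by (rule group_hom)
  have "\<pi> (commutator H a b) = commutator G (\<pi> a) (\<pi> b)"
    using assms by (simp add: commutator_def)
  also have "\<dots> = \<one>\<^bsub>G\<^esub>"
    using assms by (simp add: G.commutator_eq_one_iff G.m_comm)
  finally show ?thesis .
qed

lemma commutator_central: "a \<in> carrier H \<Longrightarrow> b \<in> carrier H \<Longrightarrow> commutator H a b \<in> group_center H"
  by (simp add: central_if_image_one image_commutator)

lemma commutator_eq_if_same_image:
  assumes "a \<in> carrier H" "b \<in> carrier H" "a' \<in> carrier H" "b' \<in> carrier H"
    and "\<pi> a = \<pi> a'" "\<pi> b = \<pi> b'"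
  shows "commutator H a' b' = commutator H a b"
proof -
  interpret group_hom H G \<pi> by (rule group_hom)
  define z where "z = inv\<^bsub>H\<^esub> a \<otimes>\<^bsub>H\<^esub> a'"
  define w where "w = inv\<^bsub>H\<^esub> b \<otimes>\<^bsub>H\<^esub> b'"
  have zw: "z \<in> group_center H" "w \<in> group_center H"
    using assms by (simp_all add: z_def w_def central_if_image_one)
  have "commutator H a' b' = commutator H (a \<otimes>\<^bsub>H\<^esub> z) (b \<otimes>\<^bsub>H\<^esub> w)"
    using assms(1-4) by (simp add: z_def w_def)
  also have "\<dots> = commutator H a (b \<otimes>\<^bsub>H\<^esub> w)"
    using assms(1,2) zw by (simp add: H.commutator_mult_central_left group_center_def)
  also have "\<dots> = commutator H a b"
    using assms(1,2) zw by (simp add: H.commutator_mult_central_right)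
  finally show ?thesis .
qed

lemma commute_if_same_image:
  assumes "a \<in> carrier H" "b \<in> carrier H" "a' \<in> carrier H" "b' \<in> carrier H"
    and "\<pi> a = \<pi> a'" "\<pi> b = \<pi> b'" "a \<otimes>\<^bsub>H\<^esub> b = b \<otimes>\<^bsub>H\<^esub> a"
  shows "a' \<otimes>\<^bsub>H\<^esub> b' = b' \<otimes>\<^bsub>H\<^esub> a'"
proof -
  have "commutator H a b = \<one>\<^bsub>H\<^esub>"
    using assms(1,2,7) H.commutator_eq_one_iff by blast
  then have "commutator H a' b' = \<one>\<^bsub>H\<^esub>"
    using commutator_eq_if_same_image[OF assms(1-6)] by simp
  then show ?thesis
    using assms(3,4) H.commutator_eq_one_iff by blast
qed

lemma derived_set_subset_lifted_commutators:
  "derived_set H (carrier H) \<subseteq> (\<lambda>(g, h). commutator H (lift g) (lift h)) ` (carrier G \<times> carrier G)"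
proof clarify
  interpret group_hom H G \<pi> by (rule group_hom)
  fix a b assume ab: "a \<in> carrier H" "b \<in> carrier H"
  then have "a \<otimes>\<^bsub>H\<^esub> b \<otimes>\<^bsub>H\<^esub> inv\<^bsub>H\<^esub> a \<otimes>\<^bsub>H\<^esub> inv\<^bsub>H\<^esub> b = commutator H (lift (\<pi> a)) (lift (\<pi> b))"
    using commutator_eq_if_same_image[of "lift (\<pi> a)" "lift (\<pi> b)" a b] by (simp add: commutator_def)
  then show "a \<otimes>\<^bsub>H\<^esub> b \<otimes>\<^bsub>H\<^esub> inv\<^bsub>H\<^esub> a \<otimes>\<^bsub>H\<^esub> inv\<^bsub>H\<^esub> b
      \<in> (\<lambda>(g, h). commutator H (lift g) (lift h)) ` (carrier G \<times> carrier G)"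
    using ab by (intro rev_image_eqI[of "(\<pi> a, \<pi> b)"]) auto
qed

lemma commutator_pow_eq_one:
  assumes "a \<in> carrier H" "b \<in> carrier H" "\<pi> a [^]\<^bsub>G\<^esub> (n::nat) = \<one>\<^bsub>G\<^esub>"
  shows "commutator H a b [^]\<^bsub>H\<^esub> n = \<one>\<^bsub>H\<^esub>"
proof -
  interpret group_hom H G \<pi> by (rule group_hom)
  have "a [^]\<^bsub>H\<^esub> n \<in> group_center H"
    using assms by (simp add: central_if_image_one hom_nat_pow)
  then have "commutator H (a [^]\<^bsub>H\<^esub> n) b = \<one>\<^bsub>H\<^esub>"
    using assms(1,2) by (simp add: H.commutator_eq_one_iff group_center_def)
  then show ?thesis
    using assms(1,2) by (simp add: H.commutator_pow_left commutator_central)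
qed

lemma pow_commute_if_image_pow_eq_one:
  assumes "a \<in> carrier H" "b \<in> carrier H" "\<pi> b [^]\<^bsub>G\<^esub> (n::nat) = \<one>\<^bsub>G\<^esub>"
  shows "a [^]\<^bsub>H\<^esub> n \<otimes>\<^bsub>H\<^esub> b = b \<otimes>\<^bsub>H\<^esub> a [^]\<^bsub>H\<^esub> n"
proof -
  have "commutator H (a [^]\<^bsub>H\<^esub> n) b = commutator H a b [^]\<^bsub>H\<^esub> n"
    using assms(1,2) by (simp add: H.commutator_pow_left commutator_central)
  also have "\<dots> = inv\<^bsub>H\<^esub> (commutator H b a) [^]\<^bsub>H\<^esub> n"
    using assms(1,2) by (simp add: H.inv_commutator)
  also have "\<dots> = inv\<^bsub>H\<^esub> (commutator H b a [^]\<^bsub>H\<^esub> n)"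
    using assms(1,2) by (simp add: H.nat_pow_inv)
  also have "\<dots> = \<one>\<^bsub>H\<^esub>"
    using assms by (simp add: commutator_pow_eq_one)
  finally show ?thesis
    using assms(1,2) by (simp add: H.commutator_eq_one_iff)
qed

end

lemma deep_commuting_adjI:
  assumes "abelian_central_extension G H \<pi>" "x \<noteq> y"
    and "a \<in> carrier H" "b \<in> carrier H" "\<pi> a = x" "\<pi> b = y" "a \<otimes>\<^bsub>H\<^esub> b = b \<otimes>\<^bsub>H\<^esub> a"
  shows "deep_commuting_adj G H \<pi> x y"
  unfolding deep_commuting_adj_def
proof (intro conjI ballI impI)
  fix a' b' assume "a' \<in> carrier H" "b' \<in> carrier H" "\<pi> a' = x" "\<pi> b' = y"
  then show "a' \<otimes>\<^bsub>H\<^esub> b' = b' \<otimes>\<^bsub>H\<^esub> a'"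
    using assms abelian_central_extension.commute_if_same_image[OF assms(1,3,4)] by metis
qed (rule assms(2))

lemma deep_commuting_adj_if_enhanced_power_adj:
  assumes ext: "abelian_central_extension G H \<pi>" and "x \<in> carrier G" "y \<in> carrier G"
    and adj: "enhanced_power_adj G x y"
  shows "deep_commuting_adj G H \<pi> x y"
proof -
  interpret abelian_central_extension G H \<pi> by (rule ext)
  interpret group_hom H G \<pi> by (rule group_hom)
  obtain g where g: "g \<in> generate G {x, y}" "x \<in> generate G {g}" "y \<in> generate G {g}"
    using assms G.cyclic_subgroup_generated_pairE unfolding enhanced_power_adj_def by metis
  have gG: "g \<in> carrier G"
    using g(1) assms(2,3) G.generate_in_carrier[of "{x, y}"] by blast
  obtain i j :: int where ij: "x = g [^]\<^bsub>G\<^esub> i" "y = g [^]\<^bsub>G\<^esub> j"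
    using g(2,3) gG by (auto simp: G.generate_pow)
  let ?c = "lift g"
  have "?c [^]\<^bsub>H\<^esub> i \<otimes>\<^bsub>H\<^esub> ?c [^]\<^bsub>H\<^esub> j = ?c [^]\<^bsub>H\<^esub> j \<otimes>\<^bsub>H\<^esub> ?c [^]\<^bsub>H\<^esub> i"
    using gG by (simp add: add.commute flip: H.int_pow_mult)
  then show ?thesis
    using adj gG ij
    by (intro deep_commuting_adjI[OF ext, of _ _ "?c [^]\<^bsub>H\<^esub> i" "?c [^]\<^bsub>H\<^esub> j"])
       (auto simp: enhanced_power_adj_def hom_int_pow)
qed

lemma deep_commuting_adj_pow:
  assumes ext: "abelian_central_extension G H \<pi>" and "h \<in> carrier G" "y \<in> carrier G"
    and "y [^]\<^bsub>G\<^esub> (n::nat) = \<one>\<^bsub>G\<^esub>" "h [^]\<^bsub>G\<^esub> n \<noteq> y"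
  shows "deep_commuting_adj G H \<pi> (h [^]\<^bsub>G\<^esub> n) y"
proof -
  interpret abelian_central_extension G H \<pi> by (rule ext)
  interpret group_hom H G \<pi> by (rule group_hom)
  have "lift h [^]\<^bsub>H\<^esub> n \<otimes>\<^bsub>H\<^esub> lift y = lift y \<otimes>\<^bsub>H\<^esub> lift h [^]\<^bsub>H\<^esub> n"
    using assms(2-4) by (simp add: pow_commute_if_image_pow_eq_one)
  then show ?thesis
    using assms(2,3,5)
    by (intro deep_commuting_adjI[OF ext, of _ _ "lift h [^]\<^bsub>H\<^esub> n" "lift y"]) (auto simp: hom_nat_pow)
qed

lemma set_mult_eq_image: "A <#>\<^bsub>G\<^esub> B = (\<lambda>(a, b). a \<otimes>\<^bsub>G\<^esub> b) ` (A \<times> B)"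
  by (auto simp: set_mult_def)

lemma finite_set_mult: "finite A \<Longrightarrow> finite B \<Longrightarrow> finite (A <#>\<^bsub>G\<^esub> B)"
  by (simp add: set_mult_eq_image)

lemma card_set_mult_le:
  assumes "finite A" "finite B"
  shows "card (A <#>\<^bsub>G\<^esub> B) \<le> card A * card B"
proof -
  have "card (A <#>\<^bsub>G\<^esub> B) \<le> card (A \<times> B)"
    unfolding set_mult_eq_image using assms by (intro card_image_le) simp
  then show ?thesis
    by (simp add: card_cartesian_product)
qed

context group
begin

lemma generate_insert_central_subset:
  assumes c: "c \<in> group_center G" and D: "D \<subseteq> carrier G"
  shows "generate G (insert c D) \<subseteq> generate G {c} <#> generate G D"
proof (rule generate_subgroup_incl)
  have c_G: "c \<in> carrier G"
    using c by (simp add: group_center_def)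
  have "generate G {c} \<subseteq> group_center G"
    using c c_G subgroup_group_center by (intro generate_subgroup_incl) auto
  then have "generate G {c} \<lhd> G"
    using c_G by (simp add: normal_if_subset_group_center generate_is_subgroup)
  then show "subgroup (generate G {c} <#> generate G D) G"
    using D second_isomorphism_grp.normal_set_mult_subgroup generate_is_subgroup
    unfolding second_isomorphism_grp_def second_isomorphism_grp_axioms_def by blast
  have "c = c \<otimes> \<one>" "\<And>d. d \<in> D \<Longrightarrow> d = \<one> \<otimes> d"
    using c_G D by auto
  then show "insert c D \<subseteq> generate G {c} <#> generate G D"
    using generate.incl[of c "{c}" G] generate.incl[of _ D G] generate.one[of G]
    unfolding set_mult_def by blast
qed

lemma card_generate_central_le:
  assumes fin: "finite (carrier G)" and "finite D" "D \<subseteq> group_center G"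
    and exp: "\<And>d. d \<in> D \<Longrightarrow> d [^] N = \<one>" and "N > 0"
  shows "card (generate G D) \<le> N ^ card D"
  using assms(2-4)
proof (induction D rule: finite_induct)
  case empty
  then show ?case
    by (simp add: generate_empty)
next
  case (insert c D)
  have c: "c \<in> carrier G" "c \<in> group_center G" "c [^] N = \<one>"
    using insert.prems by (auto simp: group_center_def)
  have D: "D \<subseteq> carrier G"
    using insert.prems by (auto simp: group_center_def)
  have fin_gen: "finite (generate G S)" if "S \<subseteq> carrier G" for S
    using fin generate_incl[OF that] by (rule finite_subset[rotated])
  have "finite (generate G {c} <#> generate G D)"
    using c(1) D by (intro finite_set_mult fin_gen) auto
  then have "card (generate G (insert c D)) \<le> card (generate G {c} <#> generate G D)"
    using generate_insert_central_subset[OF c(2) D] by (simp add: card_mono)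
  also have "\<dots> \<le> card (generate G {c}) * card (generate G D)"
    using c(1) D by (intro card_set_mult_le fin_gen) auto
  also have "card (generate G {c}) \<le> N"
    using c(1,3) \<open>N > 0\<close> by (simp add: flip: generate_pow_card) (simp add: pow_eq_id dvd_imp_le)
  also have "card (generate G D) \<le> N ^ card D"
    using insert.IH insert.prems by simp
  finally show ?case
    using insert.hyps by simp
qed

end

context abelian_central_extension
begin

lemma order_le_card_kernel:
  assumes "finite (carrier H)"
  shows "order H \<le> order G * card (kernel H G \<pi>)"
proof -
  interpret group_hom H G \<pi> by (rule group_hom)
  have "carrier H \<subseteq> lift ` carrier G <#>\<^bsub>H\<^esub> kernel H G \<pi>"
  proof
    fix a assume a: "a \<in> carrier H"
    then have "inv\<^bsub>H\<^esub> lift (\<pi> a) \<otimes>\<^bsub>H\<^esub> a \<in> kernel H G \<pi>"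
      by (simp add: kernel_def)
    moreover have "a = lift (\<pi> a) \<otimes>\<^bsub>H\<^esub> (inv\<^bsub>H\<^esub> lift (\<pi> a) \<otimes>\<^bsub>H\<^esub> a)"
      using a by simp
    ultimately show "a \<in> lift ` carrier G <#>\<^bsub>H\<^esub> kernel H G \<pi>"
      using a unfolding set_mult_eq_image
      by (intro image_eqI[of _ _ "(lift (\<pi> a), inv\<^bsub>H\<^esub> lift (\<pi> a) \<otimes>\<^bsub>H\<^esub> a)"]) auto
  qed
  moreover have fin_G: "finite (carrier G)"
    using assms surj by (metis finite_imageI)
  moreover have fin_K: "finite (kernel H G \<pi>)"
    using assms by (simp add: kernel_def)
  ultimately have "order H \<le> card (lift ` carrier G <#>\<^bsub>H\<^esub> kernel H G \<pi>)"
    unfolding order_def by (intro card_mono finite_set_mult finite_imageI)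
  also have "\<dots> \<le> card (lift ` carrier G) * card (kernel H G \<pi>)"
    using fin_G fin_K by (intro card_set_mult_le finite_imageI)
  also have "\<dots> \<le> order G * card (kernel H G \<pi>)"
    by (simp add: order_def card_image_le fin_G)
  finally show ?thesis .
qed

lemma card_kernel_le:
  assumes fin: "finite (carrier H)" and stem: "kernel H G \<pi> \<subseteq> derived H (carrier H)"
  shows "card (kernel H G \<pi>) \<le> order G ^ (order G * order G)"
proof -
  define N where "N = order G"
  have fin_G: "finite (carrier G)"
    using fin surj by (metis finite_imageI)
  then have "N > 0"
    by (simp add: N_def G.order_gt_0_iff_finite)
  define D where "D = (\<lambda>(g, h). commutator H (lift g) (lift h)) ` (carrier G \<times> carrier G)"
  have "kernel H G \<pi> \<subseteq> generate H D"
    using subset_trans[OF stem[unfolded derived_def] H.mono_generate[OF derived_set_subset_lifted_commutators]]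
    by (simp add: D_def)
  moreover have "D \<subseteq> carrier H"
    by (auto simp: D_def)
  then have "finite (generate H D)"
    using finite_subset[OF H.generate_incl fin] by blast
  ultimately have "card (kernel H G \<pi>) \<le> card (generate H D)"
    by (simp add: card_mono)
  also have "\<dots> \<le> N ^ card D"
  proof (rule H.card_generate_central_le[OF fin])
    show "finite D" "D \<subseteq> group_center H"
      using fin_G by (auto simp: D_def commutator_central)
    show "d [^]\<^bsub>H\<^esub> N = \<one>\<^bsub>H\<^esub>" if "d \<in> D" for d
      using that by (auto simp: D_def N_def commutator_pow_eq_one G.pow_order_eq_1)
  qed (rule \<open>N > 0\<close>)
  also have "\<dots> \<le> N ^ (N * N)"
  proof -
    have "card D \<le> card (carrier G \<times> carrier G)"
      unfolding D_def using fin_G by (intro card_image_le) simp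
    then show ?thesis
      using \<open>N > 0\<close> by (simp add: N_def order_def card_cartesian_product power_increasing)
  qed
  finally show ?thesis
    by (simp add: N_def)
qed

lemma abelian_central_extension_iso:
  assumes K: "group K" and \<phi>: "\<phi> \<in> iso K H"
  shows "abelian_central_extension G K (\<pi> \<circ> \<phi>)"
proof -
  interpret K: group K by (rule K)
  have \<phi>_hom: "\<phi> \<in> hom K H" and \<phi>_bij: "bij_betw \<phi> (carrier K) (carrier H)"
    using \<phi> by (auto simp: iso_def)
  show ?thesis
  proof unfold_locales
    show "\<pi> \<circ> \<phi> \<in> hom K G"
      using \<phi>_hom hom by (auto simp: hom_def Pi_iff)
    show "(\<pi> \<circ> \<phi>) ` carrier K = carrier G"
      using \<phi>_bij surj by (metis bij_betw_def image_comp)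
    show "kernel K G (\<pi> \<circ> \<phi>) \<subseteq> group_center K"
    proof (clarsimp simp: kernel_def group_center_def)
      fix k g assume k: "k \<in> carrier K" "\<pi> (\<phi> k) = \<one>\<^bsub>G\<^esub>" and g: "g \<in> carrier K"
      then have "\<phi> k \<otimes>\<^bsub>H\<^esub> \<phi> g = \<phi> g \<otimes>\<^bsub>H\<^esub> \<phi> k"
        using \<phi>_hom central_if_image_one[of "\<phi> k"] by (auto simp: group_center_def hom_def)
      then have "\<phi> (k \<otimes>\<^bsub>K\<^esub> g) = \<phi> (g \<otimes>\<^bsub>K\<^esub> k)"
        using \<phi>_hom k g by (simp add: hom_mult)
      then show "k \<otimes>\<^bsub>K\<^esub> g = g \<otimes>\<^bsub>K\<^esub> k"
        using \<phi>_bij k g by (meson bij_betw_def inj_onD K.m_closed)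
    qed
  qed
qed

lemma kernel_subset_derived_iso:
  assumes K: "group K" and \<phi>: "\<phi> \<in> iso K H" and stem: "kernel H G \<pi> \<subseteq> derived H (carrier H)"
  shows "kernel K G (\<pi> \<circ> \<phi>) \<subseteq> derived K (carrier K)"
proof
  interpret K: group K by (rule K)
  have \<phi>_hom: "group_hom K H \<phi>" and \<phi>_bij: "bij_betw \<phi> (carrier K) (carrier H)"
    using \<phi> K H.group_axioms by (auto simp: iso_def group_hom_def group_hom_axioms_def)
  fix k assume "k \<in> kernel K G (\<pi> \<circ> \<phi>)"
  then have k: "k \<in> carrier K" "\<phi> k \<in> kernel H G \<pi>"
    using \<phi>_bij by (auto simp: kernel_def bij_betw_def)
  then have "\<phi> k \<in> \<phi> ` derived K (carrier K)"
    using stem group_hom.derived_img[OF \<phi>_hom, of "carrier K"] \<phi>_bij by (auto simp: bij_betw_def)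
  then obtain d where d: "d \<in> derived K (carrier K)" "\<phi> k = \<phi> d"
    by auto
  moreover have "d \<in> carrier K"
    using d(1) K.derived_in_carrier by blast
  ultimately show "k \<in> derived K (carrier K)"
    using k(1) \<phi>_bij by (metis bij_betw_def inj_on_eq_iff)
qed

end

definition transport_group :: "('c \<Rightarrow> 'e) \<Rightarrow> ('c, 'd) monoid_scheme \<Rightarrow> 'e monoid" where
  "transport_group f E =
     \<lparr>carrier = f ` carrier E,
      monoid.mult = (\<lambda>x y. f (inv_into (carrier E) f x \<otimes>\<^bsub>E\<^esub> inv_into (carrier E) f y)),
      one = f \<one>\<^bsub>E\<^esub>\<rparr>"

context
  fixes E :: "('c, 'd) monoid_scheme" and f :: "'c \<Rightarrow> 'e"
  assumes E: "group E" and inj: "inj_on f (carrier E)"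
begin

interpretation E: group E by (rule E)

lemma carrier_transport_group [simp]: "carrier (transport_group f E) = f ` carrier E"
  by (simp add: transport_group_def)

lemma mult_transport_group [simp]:
  "x \<in> carrier E \<Longrightarrow> y \<in> carrier E \<Longrightarrow> f x \<otimes>\<^bsub>transport_group f E\<^esub> f y = f (x \<otimes>\<^bsub>E\<^esub> y)"
  using inj by (simp add: transport_group_def)

lemma one_transport_group [simp]: "\<one>\<^bsub>transport_group f E\<^esub> = f \<one>\<^bsub>E\<^esub>"
  by (simp add: transport_group_def)

lemma group_transport_group: "group (transport_group f E)"
proof (rule groupI)
  fix x assume "x \<in> carrier (transport_group f E)"
  then obtain a where "a \<in> carrier E" "x = f a"
    by auto
  then show "\<exists>y \<in> carrier (transport_group f E). y \<otimes>\<^bsub>transport_group f E\<^esub> x = \<one>\<^bsub>transport_group f E\<^esub>"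
    by (intro bexI[of _ "f (inv\<^bsub>E\<^esub> a)"]) auto
qed (auto simp: E.m_assoc)

lemma iso_transport_group: "f \<in> iso E (transport_group f E)"
  using inj by (auto simp: iso_def hom_def bij_betw_def)

lemma order_transport_group: "order (transport_group f E) = order E"
  using inj by (simp add: order_def card_image)

end

lemma stem_extension_iff:
  assumes "comm_group G"
  shows "stem_extension G H \<pi> \<longleftrightarrow> abelian_central_extension G H \<pi> \<and> finite (carrier H) \<and>
           kernel H G \<pi> \<subseteq> derived H (carrier H)"
  using assms
  by (auto simp: stem_extension_def abelian_central_extension_def abelian_central_extension_axioms_def)

lemma stem_extension_transport_group:
  fixes f :: "'c \<Rightarrow> nat"
  assumes ext: "abelian_central_extension G E \<pi>" and fin: "finite (carrier E)"
    and stem: "kernel E G \<pi> \<subseteq> derived E (carrier E)" and inj: "inj_on f (carrier E)"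
  shows "stem_extension G (transport_group f E) (\<pi> \<circ> inv_into (carrier E) f)"
proof -
  interpret abelian_central_extension G E \<pi> by (rule ext)
  have T: "group (transport_group f E)"
    using H.group_axioms inj by (rule group_transport_group)
  have \<phi>: "inv_into (carrier E) f \<in> iso (transport_group f E) E"
    using H.iso_set_sym[OF iso_transport_group[OF H.group_axioms inj]] .
  show ?thesis
    unfolding stem_extension_iff[OF G.comm_group_axioms]
    using abelian_central_extension_iso[OF T \<phi>] kernel_subset_derived_iso[OF T \<phi> stem]
      fin H.group_axioms inj
    by simp
qed

lemma stem_extension_order_le:
  assumes "comm_group G" "stem_extension G H \<pi>"
  shows "order H \<le> order G * order G ^ (order G * order G)"
proof -
  interpret abelian_central_extension G H \<pi>
    using assms stem_extension_iff by blast
  have "finite (carrier H)" "kernel H G \<pi> \<subseteq> derived H (carrier H)"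
    using assms stem_extension_iff by blast+
  then show ?thesis
    using order_le_card_kernel card_kernel_le by (meson le_trans mult_le_mono2)
qed

lemma schur_cover_exists:
  assumes G: "comm_group G" and fin: "finite (carrier G)"
  obtains H \<pi> where "schur_cover G H \<pi>"
proof -
  interpret G: comm_group G by (rule G)
  have "abelian_central_extension G G id"
    by unfold_locales (auto simp: hom_def kernel_def group_center_def)
  moreover have "kernel G G id \<subseteq> derived G (carrier G)"
    using G.derived_is_subgroup[of "carrier G"] subgroup.one_closed by (fastforce simp: kernel_def)
  moreover have "inj_on (to_nat_on (carrier G)) (carrier G)"
    using fin by (simp add: countable_finite inj_on_to_nat_on)
  ultimately obtain H0 :: "nat monoid" and \<pi>0 where H0: "stem_extension G H0 \<pi>0"
    using stem_extension_transport_group fin by blast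
  define orders where "orders = {order K | (K :: nat monoid) \<psi>. stem_extension G K \<psi>}"
  have "orders \<subseteq> {..order G * order G ^ (order G * order G)}"
    using stem_extension_order_le[OF G] by (auto simp: orders_def)
  then have "finite orders"
    by (rule finite_subset) simp
  moreover have "order H0 \<in> orders"
    using H0 by (auto simp: orders_def)
  ultimately have "Max orders \<in> orders" "\<forall>n \<in> orders. n \<le> Max orders"
    by (auto intro: Max_in)
  then obtain H :: "nat monoid" and \<pi> where "stem_extension G H \<pi>" "\<forall>n \<in> orders. n \<le> order H"
    unfolding orders_def by auto
  then have "schur_cover G H \<pi>"
    by (auto simp: schur_cover_def orders_def)
  then show ?thesis
    by (rule that)
qed

lemma order_le_schur_cover:
  fixes E :: "('c::countable, 'd) monoid_scheme"
  assumes "schur_cover G H \<pi>" "abelian_central_extension G E \<psi>" "finite (carrier E)"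
    and "kernel E G \<psi> \<subseteq> derived E (carrier E)"
  shows "order E \<le> order H"
proof -
  interpret abelian_central_extension G E \<psi> by (rule assms(2))
  have inj: "inj_on to_nat (carrier E)"
    by (meson inj_on_subset inj_to_nat subset_UNIV)
  have "stem_extension G (transport_group to_nat E) (\<psi> \<circ> inv_into (carrier E) to_nat)"
    using assms(2-4) inj by (rule stem_extension_transport_group)
  then have "order (transport_group to_nat E) \<le> order H"
    using assms(1) unfolding schur_cover_def by blast
  then show ?thesis
    using order_transport_group[OF H.group_axioms inj] by simp
qed

definition bilinear_extension ::
  "('c, 'd) monoid_scheme \<Rightarrow> nat \<Rightarrow> ('c \<Rightarrow> int) \<Rightarrow> ('c \<Rightarrow> int) \<Rightarrow> ('c \<times> int) monoid" where
  "bilinear_extension H p \<alpha> \<beta> =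
     \<lparr>carrier = carrier H \<times> {0..<int p},
      monoid.mult = (\<lambda>(h, a) (h', b). (h \<otimes>\<^bsub>H\<^esub> h', (a + b + \<alpha> h * \<beta> h') mod int p)),
      one = (\<one>\<^bsub>H\<^esub>, 0)\<rparr>"

lemma carrier_bilinear_extension [simp]:
  "carrier (bilinear_extension H p \<alpha> \<beta>) = carrier H \<times> {0..<int p}"
  by (simp add: bilinear_extension_def)

lemma mult_bilinear_extension [simp]:
  "(h, a) \<otimes>\<^bsub>bilinear_extension H p \<alpha> \<beta>\<^esub> (h', b) = (h \<otimes>\<^bsub>H\<^esub> h', (a + b + \<alpha> h * \<beta> h') mod int p)"
  by (simp add: bilinear_extension_def)

lemma one_bilinear_extension [simp]: "\<one>\<^bsub>bilinear_extension H p \<alpha> \<beta>\<^esub> = (\<one>\<^bsub>H\<^esub>, 0)"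
  by (simp add: bilinear_extension_def)

lemma order_bilinear_extension: "order (bilinear_extension H p \<alpha> \<beta>) = order H * p"
  by (simp add: order_def card_cartesian_product)

lemma fst_hom_bilinear_extension: "fst \<in> hom (bilinear_extension H p \<alpha> \<beta>) H"
  by (auto simp: hom_def)

lemma fst_image_bilinear_extension:
  "p > 0 \<Longrightarrow> fst ` carrier (bilinear_extension H p \<alpha> \<beta>) = carrier H"
  by (force simp: image_iff)

lemma hom_integer_mod_groupD:
  assumes "\<alpha> \<in> hom H (integer_mod_group p)" "p > 0" "x \<in> carrier H" "y \<in> carrier H"
  shows "\<alpha> x \<in> {0..<int p}" "\<alpha> (x \<otimes>\<^bsub>H\<^esub> y) = (\<alpha> x + \<alpha> y) mod int p"
  using assms by (auto simp: hom_def carrier_integer_mod_group)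

lemma (in group) hom_integer_mod_group_one:
  assumes "\<alpha> \<in> hom G (integer_mod_group p)"
  shows "\<alpha> \<one> = 0"
  using group_hom.hom_one[of G "integer_mod_group p" \<alpha>] assms
  by (simp add: group_hom_def group_hom_axioms_def is_group)

context
  fixes H :: "('c, 'd) monoid_scheme" and p :: nat and \<alpha> \<beta> :: "'c \<Rightarrow> int"
  assumes H: "group H" and p: "p > 0"
    and \<alpha>: "\<alpha> \<in> hom H (integer_mod_group p)" and \<beta>: "\<beta> \<in> hom H (integer_mod_group p)"
begin

interpretation H: group H by (rule H)

lemma group_bilinear_extension: "group (bilinear_extension H p \<alpha> \<beta>)"
proof (rule groupI)
  fix x y z assume "x \<in> carrier (bilinear_extension H p \<alpha> \<beta>)" "y \<in> carrier (bilinear_extension H p \<alpha> \<beta>)"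
    "z \<in> carrier (bilinear_extension H p \<alpha> \<beta>)"
  then obtain h1 a h2 b h3 c where xyz: "x = (h1, a)" "y = (h2, b)" "z = (h3, c)"
    and h: "h1 \<in> carrier H" "h2 \<in> carrier H" "h3 \<in> carrier H"
    by auto
  have "((a + b + \<alpha> h1 * \<beta> h2) mod p + c + \<alpha> (h1 \<otimes>\<^bsub>H\<^esub> h2) * \<beta> h3) mod p
      = ((a + b + \<alpha> h1 * \<beta> h2) + c + (\<alpha> h1 + \<alpha> h2) * \<beta> h3) mod p"
    using h by (intro mod_add_cong mod_mult_cong) (simp_all add: hom_integer_mod_groupD[OF \<alpha> p])
  also have "\<dots> = (a + (b + c + \<alpha> h2 * \<beta> h3) + \<alpha> h1 * (\<beta> h2 + \<beta> h3)) mod p"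
    by (simp add: algebra_simps)
  also have "\<dots> = (a + (b + c + \<alpha> h2 * \<beta> h3) mod p + \<alpha> h1 * \<beta> (h2 \<otimes>\<^bsub>H\<^esub> h3)) mod p"
    using h by (intro mod_add_cong mod_mult_cong) (simp_all add: hom_integer_mod_groupD[OF \<beta> p])
  finally show "x \<otimes>\<^bsub>bilinear_extension H p \<alpha> \<beta>\<^esub> y \<otimes>\<^bsub>bilinear_extension H p \<alpha> \<beta>\<^esub> z =
      x \<otimes>\<^bsub>bilinear_extension H p \<alpha> \<beta>\<^esub> (y \<otimes>\<^bsub>bilinear_extension H p \<alpha> \<beta>\<^esub> z)"
    using h by (simp add: xyz H.m_assoc)
next
  fix x assume "x \<in> carrier (bilinear_extension H p \<alpha> \<beta>)"
  then obtain h a where x: "x = (h, a)" "h \<in> carrier H" "a \<in> {0..<int p}"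
    by auto
  then show "\<one>\<^bsub>bilinear_extension H p \<alpha> \<beta>\<^esub> \<otimes>\<^bsub>bilinear_extension H p \<alpha> \<beta>\<^esub> x = x"
    using H.hom_integer_mod_group_one[OF \<alpha>] by simp
  define c where "c = (- a - \<alpha> (inv\<^bsub>H\<^esub> h) * \<beta> h) mod p"
  have "(c + a + \<alpha> (inv\<^bsub>H\<^esub> h) * \<beta> h) mod p = ((- a - \<alpha> (inv\<^bsub>H\<^esub> h) * \<beta> h) + a + \<alpha> (inv\<^bsub>H\<^esub> h) * \<beta> h) mod p"
    by (intro mod_add_cong) (simp_all add: c_def)
  then have "(inv\<^bsub>H\<^esub> h, c) \<otimes>\<^bsub>bilinear_extension H p \<alpha> \<beta>\<^esub> x = \<one>\<^bsub>bilinear_extension H p \<alpha> \<beta>\<^esub>"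
    using x by simp
  moreover have "(inv\<^bsub>H\<^esub> h, c) \<in> carrier (bilinear_extension H p \<alpha> \<beta>)"
    using x p by (simp add: c_def)
  ultimately show "\<exists>y \<in> carrier (bilinear_extension H p \<alpha> \<beta>).
      y \<otimes>\<^bsub>bilinear_extension H p \<alpha> \<beta>\<^esub> x = \<one>\<^bsub>bilinear_extension H p \<alpha> \<beta>\<^esub>"
    by blast
qed (use p hom_integer_mod_groupD[OF \<alpha> p] hom_integer_mod_groupD[OF \<beta> p] in auto)


lemma pow_central_bilinear_extension:
  "(\<one>\<^bsub>H\<^esub>, 1) [^]\<^bsub>bilinear_extension H p \<alpha> \<beta>\<^esub> n = (\<one>\<^bsub>H\<^esub>, int n mod p)"
  using H.hom_integer_mod_group_one[OF \<alpha>] by (induction n) (simp_all add: mod_simps add.commute)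

lemma central_mem_subgroup_bilinear_extension:
  assumes D: "subgroup D (bilinear_extension H p \<alpha> \<beta>)" and one: "(\<one>\<^bsub>H\<^esub>, 1) \<in> D"
    and c: "c \<in> {0..<int p}"
  shows "(\<one>\<^bsub>H\<^esub>, c) \<in> D"
proof -
  interpret P: group "bilinear_extension H p \<alpha> \<beta>"
    by (rule group_bilinear_extension)
  have "(\<one>\<^bsub>H\<^esub>, 1) [^]\<^bsub>bilinear_extension H p \<alpha> \<beta>\<^esub> nat c \<in> D"
    using P.subgroup_int_pow_closed[OF D one, of "int (nat c)"] by (simp only: int_pow_int)
  then show ?thesis
    using c by (simp add: pow_central_bilinear_extension)
qed

lemma commutator_bilinear_extension:
  assumes "p > 1" and ab: "a \<in> carrier H" "b \<in> carrier H" "a \<otimes>\<^bsub>H\<^esub> b = b \<otimes>\<^bsub>H\<^esub> a"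
    and val: "\<alpha> a = 1" "\<alpha> b = 0" "\<beta> a = 0" "\<beta> b = 1"
  shows "commutator (bilinear_extension H p \<alpha> \<beta>) (a, 0) (b, 0) = (\<one>\<^bsub>H\<^esub>, 1)"
proof -
  interpret P: group "bilinear_extension H p \<alpha> \<beta>"
    by (rule group_bilinear_extension)
  define ba where "ba = (b, 0) \<otimes>\<^bsub>bilinear_extension H p \<alpha> \<beta>\<^esub> (a, 0)"
  have carrier: "ba \<in> carrier (bilinear_extension H p \<alpha> \<beta>)" "(\<one>\<^bsub>H\<^esub>, 1) \<in> carrier (bilinear_extension H p \<alpha> \<beta>)"
    using ab \<open>p > 1\<close> by (simp_all add: ba_def)
  have "commutator (bilinear_extension H p \<alpha> \<beta>) (a, 0) (b, 0)
      = (a, 0) \<otimes>\<^bsub>bilinear_extension H p \<alpha> \<beta>\<^esub> (b, 0) \<otimes>\<^bsub>bilinear_extension H p \<alpha> \<beta>\<^esub> inv\<^bsub>bilinear_extension H p \<alpha> \<beta>\<^esub> ba"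
    using ab p by (simp add: P.commutator_eq ba_def del: mult_bilinear_extension)
  also have "(a, 0) \<otimes>\<^bsub>bilinear_extension H p \<alpha> \<beta>\<^esub> (b, 0) = (\<one>\<^bsub>H\<^esub>, 1) \<otimes>\<^bsub>bilinear_extension H p \<alpha> \<beta>\<^esub> ba"
    using ab val \<open>p > 1\<close> H.hom_integer_mod_group_one[OF \<alpha>] by (simp add: ba_def)
  finally show ?thesis
    using carrier by (metis P.inv_closed P.m_assoc P.r_inv P.r_one)
qed

end

context abelian_central_extension
begin

lemma hom_comp_integer_mod_group:
  "\<phi> \<in> hom G (integer_mod_group p) \<Longrightarrow> \<phi> \<circ> \<pi> \<in> hom H (integer_mod_group p)"
  using hom by (auto simp: hom_def Pi_iff)

lemma abelian_central_extension_bilinear_extension: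
  assumes p: "p > 0" and \<phi>: "\<phi> \<in> hom G (integer_mod_group p)" and \<psi>: "\<psi> \<in> hom G (integer_mod_group p)"
  shows "abelian_central_extension G (bilinear_extension H p (\<phi> \<circ> \<pi>) (\<psi> \<circ> \<pi>)) (\<pi> \<circ> fst)"
proof -
  interpret group_hom H G \<pi> by (rule group_hom)
  let ?P = "bilinear_extension H p (\<phi> \<circ> \<pi>) (\<psi> \<circ> \<pi>)"
  have P: "group ?P"
    using H.group_axioms p hom_comp_integer_mod_group[OF \<phi>] hom_comp_integer_mod_group[OF \<psi>]
    by (rule group_bilinear_extension)
  have \<phi>1: "\<phi> \<one>\<^bsub>G\<^esub> = 0" and \<psi>1: "\<psi> \<one>\<^bsub>G\<^esub> = 0"
    using G.hom_integer_mod_group_one \<phi> \<psi> by blast+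
  show ?thesis
  proof (intro abelian_central_extension.intro abelian_central_extension_axioms.intro)
    show "group ?P" "comm_group G"
      by (fact P) (fact G.comm_group_axioms)
    show "\<pi> \<circ> fst \<in> hom ?P G"
      by (auto simp: hom_def)
    show "(\<pi> \<circ> fst) ` carrier ?P = carrier G"
      using surj fst_image_bilinear_extension[OF p] by (metis image_comp)
    show "kernel ?P G (\<pi> \<circ> fst) \<subseteq> group_center ?P"
    proof
      fix u assume "u \<in> kernel ?P G (\<pi> \<circ> fst)"
      then obtain k a where u: "u = (k, a)" "k \<in> carrier H" "\<pi> k = \<one>\<^bsub>G\<^esub>" "a \<in> {0..<int p}"
        by (auto simp: kernel_def)
      have "u \<otimes>\<^bsub>?P\<^esub> v = v \<otimes>\<^bsub>?P\<^esub> u" if v_in: "v \<in> carrier ?P" for v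
      proof -
        obtain h b where v: "v = (h, b)" "h \<in> carrier H"
          using v_in by auto
        then have "k \<otimes>\<^bsub>H\<^esub> h = h \<otimes>\<^bsub>H\<^esub> k"
          using central_if_image_one[OF u(2,3)] by (simp add: group_center_def)
        then show ?thesis
          using u v \<phi>1 \<psi>1 by (simp add: add.commute)
      qed
      moreover have "u \<in> carrier ?P"
        using u by simp
      ultimately show "u \<in> group_center ?P"
        unfolding group_center_def by blast
    qed
  qed
qed

lemma kernel_bilinear_extension_subset_derived:
  assumes p: "p > 1" and \<phi>: "\<phi> \<in> hom G (integer_mod_group p)" and \<psi>: "\<psi> \<in> hom G (integer_mod_group p)"
    and stem: "kernel H G \<pi> \<subseteq> derived H (carrier H)"
    and ab: "a \<in> carrier H" "b \<in> carrier H" "a \<otimes>\<^bsub>H\<^esub> b = b \<otimes>\<^bsub>H\<^esub> a"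
    and val: "\<phi> (\<pi> a) = 1" "\<phi> (\<pi> b) = 0" "\<psi> (\<pi> a) = 0" "\<psi> (\<pi> b) = 1"
  defines "P \<equiv> bilinear_extension H p (\<phi> \<circ> \<pi>) (\<psi> \<circ> \<pi>)"
  shows "kernel P G (\<pi> \<circ> fst) \<subseteq> derived P (carrier P)"
proof
  interpret group_hom H G \<pi> by (rule group_hom)
  interpret P: group P
    unfolding P_def using p H.group_axioms hom_comp_integer_mod_group[OF \<phi>] hom_comp_integer_mod_group[OF \<psi>]
    by (intro group_bilinear_extension) auto
  have \<phi>1: "\<phi> \<one>\<^bsub>G\<^esub> = 0" and \<psi>1: "\<psi> \<one>\<^bsub>G\<^esub> = 0"
    using G.hom_integer_mod_group_one \<phi> \<psi> by blast+
  have \<alpha>: "\<phi> \<circ> \<pi> \<in> hom H (integer_mod_group p)" and \<beta>: "\<psi> \<circ> \<pi> \<in> hom H (integer_mod_group p)"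
    using hom_comp_integer_mod_group \<phi> \<psi> by blast+
  let ?D = "derived P (carrier P)"
  have D: "subgroup ?D P"
    by (simp add: P.derived_is_subgroup)
  have "(a, 0) \<in> carrier P" "(b, 0) \<in> carrier P"
    using ab p by (simp_all add: P_def)
  then have "commutator P (a, 0) (b, 0) \<in> ?D"
    by (rule P.commutator_in_derived)
  then have "(\<one>\<^bsub>H\<^esub>, 1) \<in> ?D"
    using commutator_bilinear_extension[OF H.group_axioms _ \<alpha> \<beta> p ab] val p by (simp add: P_def)
  then have central_D: "(\<one>\<^bsub>H\<^esub>, c) \<in> ?D" if "c \<in> {0..<int p}" for c
    using central_mem_subgroup_bilinear_extension[OF H.group_axioms _ \<alpha> \<beta> D[unfolded P_def]] that p
    by (simp add: P_def)
  fix u assume "u \<in> kernel P G (\<pi> \<circ> fst)"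
  then obtain k c where u: "u = (k, c)" "k \<in> kernel H G \<pi>" "c \<in> {0..<int p}"
    by (auto simp: kernel_def P_def)
  have "group_hom P H fst"
    using fst_hom_bilinear_extension P.group_axioms H.group_axioms
    by (simp add: group_hom_def group_hom_axioms_def P_def)
  then have "derived H (carrier H) = fst ` ?D"
    using group_hom.derived_img[of P H fst "carrier P"] fst_image_bilinear_extension p by (simp add: P_def)
  then obtain e where e: "(k, e) \<in> ?D"
    using u(2) stem by force
  then have "(k, e) \<otimes>\<^bsub>P\<^esub> (\<one>\<^bsub>H\<^esub>, (c - e) mod p) \<in> ?D"
    using p by (intro subgroup.m_closed[OF D] central_D) auto
  moreover have "(k, e) \<otimes>\<^bsub>P\<^esub> (\<one>\<^bsub>H\<^esub>, (c - e) mod p) = u"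
    using u \<psi>1 by (simp add: P_def kernel_def mod_simps)
  ultimately show "u \<in> ?D"
    by simp
qed

end

lemma schur_cover_lifts_not_commute:
  assumes G: "comm_group G" and cover: "schur_cover G H \<pi>" and p: "Factorial_Ring.prime p"
    and \<phi>: "\<phi> \<in> hom G (integer_mod_group p)" and \<psi>: "\<psi> \<in> hom G (integer_mod_group p)"
    and ab: "a \<in> carrier H" "b \<in> carrier H"
    and val: "\<phi> (\<pi> a) = 1" "\<phi> (\<pi> b) = 0" "\<psi> (\<pi> a) = 0" "\<psi> (\<pi> b) = 1"
  shows "a \<otimes>\<^bsub>H\<^esub> b \<noteq> b \<otimes>\<^bsub>H\<^esub> a"
proof
  assume commute: "a \<otimes>\<^bsub>H\<^esub> b = b \<otimes>\<^bsub>H\<^esub> a"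
  have "stem_extension G H \<pi>"
    using cover by (simp add: schur_cover_def)
  then have ext: "abelian_central_extension G H \<pi>" and fin: "finite (carrier H)"
    and stem: "kernel H G \<pi> \<subseteq> derived H (carrier H)"
    using stem_extension_iff G by blast+
  interpret abelian_central_extension G H \<pi> by (rule ext)
  have p1: "p > 1"
    using p prime_gt_1_nat by blast
  let ?P = "bilinear_extension H p (\<phi> \<circ> \<pi>) (\<psi> \<circ> \<pi>)"
  have "order ?P \<le> order H"
  proof (rule order_le_schur_cover[OF cover])
    show "abelian_central_extension G ?P (\<pi> \<circ> fst)"
      using p1 \<phi> \<psi> by (intro abelian_central_extension_bilinear_extension) auto
    show "finite (carrier ?P)"
      using fin by simp
    show "kernel ?P G (\<pi> \<circ> fst) \<subseteq> derived ?P (carrier ?P)"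
      using kernel_bilinear_extension_subset_derived[OF p1 \<phi> \<psi> stem ab commute val] .
  qed
  moreover have "order H > 0"
    using fin H.order_gt_0_iff_finite by blast
  ultimately show False
    using p1 by (simp add: order_bilinear_extension)
qed

lemma enhanced_power_adj_if_deep_commuting_adj:
  fixes p :: nat
  assumes G: "comm_group G" and fin: "finite (carrier G)" and p: "Factorial_Ring.prime p"
    and exp: "\<And>g. g \<in> carrier G \<Longrightarrow> g [^]\<^bsub>G\<^esub> p = \<one>\<^bsub>G\<^esub>"
    and cover: "schur_cover G H \<pi>" and xy: "x \<in> carrier G" "y \<in> carrier G"
    and adj: "deep_commuting_adj G H \<pi> x y"
  shows "enhanced_power_adj G x y"
proof -
  interpret G: comm_group G by (rule G)
  interpret abelian_central_extension G H \<pi>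
    using cover G by (simp add: schur_cover_def stem_extension_iff)
  have cyclic_iff: "cyclic_group (subgroup_generated G {u, v}) \<longleftrightarrow> v \<in> generate G {u}"
    if "u \<in> carrier G" "v \<in> carrier G" "u \<noteq> \<one>\<^bsub>G\<^esub>" for u v
    using that G.cyclic_subgroup_generated_pair_iff[OF p] exp by blast
  have "cyclic_group (subgroup_generated G {x, y})"
  proof (rule ccontr)
    assume not_cyclic: "\<not> cyclic_group (subgroup_generated G {x, y})"
    have "x \<noteq> \<one>\<^bsub>G\<^esub>" "y \<noteq> \<one>\<^bsub>G\<^esub>"
      using not_cyclic xy G.cyclic_subgroup_generated_pairI generate.one insert_commute by metis+
    then have x_y: "x \<notin> generate G {y}" and y_x: "y \<notin> generate G {x}"
      using not_cyclic xy cyclic_iff insert_commute by metis+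
    obtain \<phi> where \<phi>: "\<phi> \<in> hom G (integer_mod_group p)" "\<phi> x = 1" "\<phi> y = 0"
      using G.exists_character[OF fin p exp G.generate_is_subgroup xy(1) x_y] xy(2)
      by (metis empty_subsetI generate.incl insert_subset singletonI)
    obtain \<psi> where \<psi>: "\<psi> \<in> hom G (integer_mod_group p)" "\<psi> y = 1" "\<psi> x = 0"
      using G.exists_character[OF fin p exp G.generate_is_subgroup xy(2) y_x] xy(1)
      by (metis empty_subsetI generate.incl insert_subset singletonI)
    have "\<forall>x' \<in> carrier H. \<forall>y' \<in> carrier H. \<pi> x' = x \<longrightarrow> \<pi> y' = y \<longrightarrow>
        x' \<otimes>\<^bsub>H\<^esub> y' = y' \<otimes>\<^bsub>H\<^esub> x'"
      using adj unfolding deep_commuting_adj_def by (rule conjunct2)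
    then have "lift x \<otimes>\<^bsub>H\<^esub> lift y = lift y \<otimes>\<^bsub>H\<^esub> lift x"
      using xy by (auto dest: bspec[of _ _ "lift x"])
    then show False
      using schur_cover_lifts_not_commute[OF G cover p \<phi>(1) \<psi>(1), of "lift x" "lift y"] \<phi> \<psi> xy
      by simp
  qed
  then show ?thesis
    using adj by (simp add: enhanced_power_adj_def deep_commuting_adj_def)
qed

lemma not_deep_commuting_eq_enhanced_power:
  assumes G: "comm_group G" and fin: "finite (carrier G)" and p: "Factorial_Ring.prime p"
    and ord_G: "order G = p ^ n" and not_cyclic: "\<not> cyclic_group G"
    and x: "x \<in> carrier G" "x \<noteq> \<one>\<^bsub>G\<^esub>" "group.ord G x \<noteq> p"
  shows "\<not> deep_commuting_eq_enhanced_power G"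
proof
  assume eq: "deep_commuting_eq_enhanced_power G"
  interpret G: comm_group G by (rule G)
  obtain h y where h: "h \<in> carrier G" and y: "y \<in> carrier G" "y [^]\<^bsub>G\<^esub> p = \<one>\<^bsub>G\<^esub>"
    and ord_hp: "G.ord (h [^]\<^bsub>G\<^esub> p) = p" and y_notin: "y \<notin> generate G {h [^]\<^bsub>G\<^esub> p}"
    using G.non_elementary_witness[OF fin p ord_G not_cyclic x] by blast
  have hp: "h [^]\<^bsub>G\<^esub> p \<in> carrier G"
    using h by simp
  then have hp_ne: "h [^]\<^bsub>G\<^esub> p \<noteq> \<one>\<^bsub>G\<^esub>"
    using ord_hp G.ord_eq_1 prime_gt_1_nat[OF p] by force
  have hp_pow: "(h [^]\<^bsub>G\<^esub> p) [^]\<^bsub>G\<^esub> p = \<one>\<^bsub>G\<^esub>"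
    using G.pow_ord_eq_1[OF hp] by (simp only: ord_hp)
  obtain H :: "nat monoid" and \<pi> where cover: "schur_cover G H \<pi>"
    using schur_cover_exists[OF G fin] .
  have "h [^]\<^bsub>G\<^esub> p \<noteq> y"
    using y_notin generate.incl[of y "{y}" G] by auto
  then have "deep_commuting_adj G H \<pi> (h [^]\<^bsub>G\<^esub> p) y"
    using cover G h y by (intro deep_commuting_adj_pow) (simp_all add: schur_cover_def stem_extension_iff)
  moreover have "\<not> enhanced_power_adj G (h [^]\<^bsub>G\<^esub> p) y"
    using G.cyclic_subgroup_generated_pair_iff[OF p hp hp_pow hp_ne y] y_notin
    by (simp add: enhanced_power_adj_def)
  ultimately show False
    using eq cover hp y(1) by (simp add: deep_commuting_eq_enhanced_power_def)
qed

theorem theorem4p1: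
  fixes G :: "('a, 'b) monoid_scheme" and p n :: nat
  assumes "comm_group G" and "finite (carrier G)"
    and "Factorial_Ring.prime p" and "order G = p ^ n"
    and "\<not> cyclic_group G"
  shows "deep_commuting_eq_enhanced_power G \<longleftrightarrow> elementary_abelian G p"
proof
  assume "deep_commuting_eq_enhanced_power G"
  then show "elementary_abelian G p"
    using not_deep_commuting_eq_enhanced_power[OF assms] assms(1)
    by (auto simp: elementary_abelian_def)
next
  assume elementary: "elementary_abelian G p"
  interpret G: comm_group G by (rule assms(1))
  have exp: "g [^]\<^bsub>G\<^esub> p = \<one>\<^bsub>G\<^esub>" if "g \<in> carrier G" for g
    using elementary that G.pow_ord_eq_1[OF that] by (cases "g = \<one>\<^bsub>G\<^esub>") (auto simp: elementary_abelian_def)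
  show "deep_commuting_eq_enhanced_power G"
    unfolding deep_commuting_eq_enhanced_power_def
  proof (intro allI impI ballI iffI)
    fix H :: "nat monoid" and \<pi> x y
    assume cover: "schur_cover G H \<pi>" and "x \<in> carrier G" "y \<in> carrier G"
    then show "deep_commuting_adj G H \<pi> x y \<Longrightarrow> enhanced_power_adj G x y"
      using enhanced_power_adj_if_deep_commuting_adj[OF assms(1,2,3) exp] by blast
    show "enhanced_power_adj G x y \<Longrightarrow> deep_commuting_adj G H \<pi> x y"
      using cover \<open>x \<in> carrier G\<close> \<open>y \<in> carrier G\<close> assms(1) deep_commuting_adj_if_enhanced_power_adj
      by (metis schur_cover_def stem_extension_iff)
  qed
qed

end
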